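(* For every $C>1$ and every natural number $L$ there is $n_0\in\mathbb N$ such that the following holds. Let $G=(V_1,V_2,E)$ be a $C$-bipartite-Ramsey graph with $|V_1|,|V_2|\ge n_0$, and put $\varepsilon_i:=(64C)^{-i}$ for $i\in[L]$. Then there are vertices $u_1,\ldots,u_L\in V_1$ such that for all $i\in[L]$, $$\Big|N(u_i)\setminus\bigcup_{j<i}N(u_j)\Big|\ge\varepsilon_i|V_2|\quad\text{and}\quad\Big|V_2\setminus\bigcup_{j\le i}N(u_j)\Big|\ge\varepsilon_i|V_2|.$$
   Context: A bipartite graph $G=(V_1,V_2,E)$ has vertex set $V_1\sqcup V_2$ and edge set $E\subset V_1\times V_2$; $N(u)$ is the neighbourhood of $u$. Given $C>0$, $G$ is called $C$-bipartite-Ramsey if for all integers $t_1\ge C\log_2|V_1|$ and $t_2\ge C\log_2|V_2|$ there are no $T_1\subset V_1$, $T_2\subset V_2$ with $|T_1|=t_1$, $|T_2|=t_2$ such that all pairs in $T_1\times T_2$ are edges, or all are non-edges. $[L]=\{1,\ldots,L\}$. *)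

theory Defs
  imports "HOL-Analysis.Analysis"
begin

definition bipartite_graph :: "'a set \<Rightarrow> 'b set \<Rightarrow> ('a \<times> 'b) set \<Rightarrow> bool" where
  "bipartite_graph V1 V2 E \<longleftrightarrow> finite V1 \<and> finite V2 \<and> E \<subseteq> V1 \<times> V2"

definition nbhd :: "'b set \<Rightarrow> ('a \<times> 'b) set \<Rightarrow> 'a \<Rightarrow> 'b set" where
  "nbhd V2 E u = {v \<in> V2. (u, v) \<in> E}"

definition bipartite_ramsey :: "real \<Rightarrow> 'a set \<Rightarrow> 'b set \<Rightarrow> ('a \<times> 'b) set \<Rightarrow> bool" where
  "bipartite_ramsey C V1 V2 E \<longleftrightarrow>
     (\<forall>t1 t2 :: nat. real t1 \<ge> C * log 2 (real (card V1)) \<longrightarrow> real t2 \<ge> C * log 2 (real (card V2)) \<longrightarrow>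
        \<not> (\<exists>T1 T2. T1 \<subseteq> V1 \<and> T2 \<subseteq> V2 \<and> card T1 = t1 \<and> card T2 = t2 \<and>
               ((T1 \<times> T2 \<subseteq> E) \<or> (T1 \<times> T2) \<inter> E = {})))"

end

(*
  The vertices u_i are chosen greedily: if W is the part of V2 not yet covered,
  the Ramsey property provides a vertex whose neighbourhood splits W into two
  parts of size at least |W|/(64C). Otherwise at least half of V1 has fewer
  than |W|/(64C) neighbours in W, or at least half has fewer than |W|/(64C)
  non-neighbours. Picking t ~ C log2 n vertices on one side greedily, each
  related to at most a 1/(16C) fraction of the surviving vertices on the other
  side, keeps a fraction (1 - 1/(16C))^t >= e^-1 n^(-1/8) of them. For large
  n this is still more than C log2 n, so there is an empty (or complete)
  bipartite subgraph with sides of size ceiling (C log2 |Vi|), contradicting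
  the Ramsey property.
*)
theory Submission
  imports Defs "HOL-Real_Asymp.Real_Asymp"
begin

lemma sum_card_filter_swap:
  assumes "finite X" "finite Y"
  shows "(\<Sum>x\<in>X. card {y\<in>Y. R x y}) = (\<Sum>y\<in>Y. card {x\<in>X. R x y})"
proof -
  have "card {y\<in>Y. R x y} = (\<Sum>y\<in>Y. of_bool (R x y))" for x
    using assms(2) by (simp add: Int_def)
  moreover have "card {x\<in>X. R x y} = (\<Sum>x\<in>X. of_bool (R x y))" for y
    using assms(1) by (simp add: Int_def)
  ultimately show ?thesis
    by (simp only:) (rule sum.swap)
qed

lemma exists_vertex_with_few_neighbours:
  fixes c :: real
  assumes fin: "finite X" "X \<noteq> {}" "finite Y"
    and deg: "\<forall>y\<in>Y. card {x\<in>X. R x y} \<le> c * card X"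
  obtains x where "x \<in> X" "card {y\<in>Y. R x y} \<le> c * card Y"
proof -
  let ?d = "\<lambda>x. card {y\<in>Y. R x y}"
  have "Min (?d ` X) \<in> ?d ` X"
    using fin(1,2) by simp
  then obtain x where x: "x \<in> X" "Min (?d ` X) = ?d x"
    by (rule imageE)
  have "real (card X * ?d x) \<le> real (\<Sum>y\<in>Y. card {x\<in>X. R x y})"
    using card_Min_le_sum[OF fin(1), of ?d] sum_card_filter_swap[OF fin(1,3)] x(2)
    by (simp only: of_nat_le_iff)
  also have "\<dots> \<le> (\<Sum>y\<in>Y. c * card X)"
    unfolding of_nat_sum using deg by (intro sum_mono) auto
  finally have "card X * ?d x \<le> card X * (c * card Y)"
    by (simp add: mult_ac)
  with fin(1,2) have "?d x \<le> c * card Y"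
    by (simp add: mult_le_cancel_left card_gt_0_iff)
  with x(1) show ?thesis
    by (rule that)
qed

lemma card_sparse_columns_ge_half:
  fixes \<epsilon> :: real
  assumes fin: "finite A" "finite W" and \<epsilon>: "\<epsilon> > 0"
    and rows: "\<forall>a\<in>A. card {w\<in>W. R a w} \<le> \<epsilon> * card W"
  shows "card W \<le> 2 * card {w\<in>W. card {a\<in>A. R a w} \<le> 2 * \<epsilon> * card A}"
    (is "_ \<le> 2 * card ?sparse")
proof (cases "A = {}")
  case False
  define dense where "dense = W - ?sparse"
  have "card dense * (2 * \<epsilon> * card A) = (\<Sum>w\<in>dense. 2 * \<epsilon> * card A)"
    by simp
  also have "\<dots> \<le> (\<Sum>w\<in>dense. real (card {a\<in>A. R a w}))"
    by (rule sum_mono) (auto simp: dense_def)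
  also have "\<dots> \<le> (\<Sum>w\<in>W. real (card {a\<in>A. R a w}))"
    using fin by (intro sum_mono2) (auto simp: dense_def)
  also have "\<dots> = (\<Sum>a\<in>A. real (card {w\<in>W. R a w}))"
    using sum_card_filter_swap[OF fin, of R] by (simp flip: of_nat_sum)
  also have "\<dots> \<le> card A * (\<epsilon> * card W)"
    using sum_mono[of A "\<lambda>a. real (card {w\<in>W. R a w})" "\<lambda>_. \<epsilon> * card W"] rows by simp
  finally have "(2 * card dense) * (\<epsilon> * card A) \<le> card W * (\<epsilon> * card A)"
    by (simp add: algebra_simps)
  then have "2 * card dense \<le> card W"
    using \<epsilon> False fin(1) by (simp add: mult_le_cancel_right card_gt_0_iff)
  moreover have "card dense = card W - card ?sparse"
    unfolding dense_def using fin(2) by (intro card_Diff_subset) auto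
  moreover have "card ?sparse \<le> card W"
    using fin(2) by (intro card_mono) auto
  ultimately show ?thesis
    by linarith
qed (use fin in simp)

lemma greedy_empty_biclique:
  fixes c :: real
  assumes fin: "finite X" "finite Y"
    and sparse: "\<forall>y\<in>Y. card {x\<in>X. R x y} \<le> c * card X"
    and c: "0 \<le> c" "c \<le> 1/2"
    and k: "2 * k \<le> card X"
  shows "\<exists>S Y'. S \<subseteq> X \<and> card S = k \<and> Y' \<subseteq> Y \<and> (\<forall>x\<in>S. \<forall>y\<in>Y'. \<not> R x y) \<and>
           card Y * (1 - 2 * c) ^ k \<le> card Y'"
  using k
proof (induction k)
  case 0
  show ?case
    by (intro exI[of _ "{}"] exI[of _ Y]) auto
next
  case (Suc k)
  then obtain S Y' where S: "S \<subseteq> X" "card S = k" "Y' \<subseteq> Y" "\<forall>x\<in>S. \<forall>y\<in>Y'. \<not> R x y"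
    and Y': "card Y * (1 - 2 * c) ^ k \<le> card Y'"
    by auto
  define X' where "X' = X - S"
  have "card X' = card X - k"
    using S fin by (simp add: X'_def card_Diff_subset finite_subset)
  with Suc.prems have X': "card X \<le> 2 * card X'" "X' \<noteq> {}"
    by auto
  have fin': "finite X'" "finite Y'"
    using fin S(3) by (auto simp: X'_def finite_subset)
  have "\<forall>y\<in>Y'. card {x\<in>X'. R x y} \<le> (2 * c) * card X'"
  proof
    fix y assume "y \<in> Y'"
    have "real (card {x\<in>X'. R x y}) \<le> card {x\<in>X. R x y}"
      using fin by (intro of_nat_mono card_mono) (auto simp: X'_def)
    also have "\<dots> \<le> c * card X"
      using sparse S(3) \<open>y \<in> Y'\<close> by auto
    also have "\<dots> \<le> (2 * c) * card X'"
      using X'(1) c(1) mult_left_mono[of "card X" "2 * card X'" c] by simp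
    finally show "card {x\<in>X'. R x y} \<le> (2 * c) * card X'" .
  qed
  then obtain x where x: "x \<in> X'" and few: "card {y\<in>Y'. R x y} \<le> 2 * c * card Y'"
    using exists_vertex_with_few_neighbours[OF fin'(1) X'(2) fin'(2)] by blast
  define Y'' where "Y'' = Y' - {y\<in>Y'. R x y}"
  have "card Y'' = card Y' - card {y\<in>Y'. R x y}"
    unfolding Y''_def using fin'(2) by (intro card_Diff_subset) auto
  moreover have "card {y\<in>Y'. R x y} \<le> card Y'"
    using fin'(2) by (intro card_mono) auto
  ultimately have "(1 - 2 * c) * card Y' \<le> card Y''"
    using few by (simp add: left_diff_distrib)
  moreover have "card Y * (1 - 2 * c) ^ Suc k \<le> (1 - 2 * c) * card Y'"
    using mult_left_mono[OF Y', of "1 - 2 * c"] c by (simp add: mult_ac)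
  moreover have "insert x S \<subseteq> X" "card (insert x S) = Suc k"
    using S x fin by (auto simp: X'_def finite_subset)
  moreover have "Y'' \<subseteq> Y" "\<forall>a\<in>insert x S. \<forall>y\<in>Y''. \<not> R a y"
    using S by (auto simp: Y''_def)
  ultimately show ?case
    by (intro exI[of _ "insert x S"] exI[of _ Y'']) (blast intro: order_trans)
qed

lemma log2_le_three_halves_ln:
  fixes n :: real
  assumes "n \<ge> 1"
  shows "log 2 n \<le> 3/2 * ln n"
proof -
  have "log 2 n = ln n / ln 2"
    by (simp add: log_def)
  also have "\<dots> \<le> ln n / (2/3)"
    using ln2_ge_two_thirds assms by (intro divide_left_mono) auto
  finally show ?thesis
    by simp
qed

lemma power_one_minus_ge_exp_powr:
  fixes C n :: real
  assumes C: "C > 1" and n: "n \<ge> 1" and t: "real t \<le> C * log 2 n + 1"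
  shows "exp (-1) * n powr (-1/8) \<le> (1 - 1 / (16 * C)) ^ t"
proof -
  define x where "x = 1 / (16 * C)"
  have x: "0 < x" "x \<le> 1/16"
    using C by (auto simp: x_def field_simps)
  have "- x - 2 * x\<^sup>2 \<le> ln (1 - x)"
    using x by (intro ln_one_minus_pos_lower_bound) auto
  moreover have "2 * x\<^sup>2 \<le> x / 8"
    using x by (simp add: power2_eq_square)
  ultimately have ln_x: "- (9/8) * x \<le> ln (1 - x)"
    by linarith
  have "- 1 - 1/8 * ln n \<le> - (9/8) * x * (C * log 2 n + 1)"
  proof -
    have "(9/8) * x * (C * log 2 n) = 9/128 * log 2 n"
      using C by (simp add: x_def)
    also have "\<dots> \<le> 1/8 * ln n"
      using log2_le_three_halves_ln[OF n] ln_ge_zero[OF n] by simp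
    finally show ?thesis
      using x by (simp add: algebra_simps)
  qed
  also have "\<dots> \<le> - (9/8) * x * real t"
    using t x by (intro mult_left_mono_neg) auto
  also have "\<dots> \<le> real t * ln (1 - x)"
    using mult_left_mono[OF ln_x, of "real t"] by (simp add: algebra_simps)
  finally have exponent: "- 1 - 1/8 * ln n \<le> real t * ln (1 - x)" .
  have "exp (-1) * n powr (-1/8) = exp (-1) * exp (-1/8 * ln n)"
    using n by (simp add: powr_def)
  also have "\<dots> = exp (- 1 - 1/8 * ln n)"
    by (simp flip: exp_add)
  also have "\<dots> \<le> exp (real t * ln (1 - x))"
    using exponent by simp
  also have "\<dots> = (1 - x) ^ t"
    using x by (simp add: exp_of_nat_mult)
  finally show ?thesis
    by (simp add: x_def)
qed

lemma powr_seven_eighths_bounds: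
  fixes \<eta> n m t :: real
  assumes n: "n \<ge> 1" and \<eta>: "0 \<le> \<eta>" "\<eta> * n \<le> 2 * m" and t: "t \<le> \<eta> / 6 * n powr (7/8)"
  shows "2 * t \<le> m" and "t \<le> exp (-1) * n powr (-1/8) * m"
proof -
  have "n powr (7/8) = n powr (-1/8) * n"
    using n powr_add[of n "-1/8" 1] by simp
  then have t': "t \<le> n powr (-1/8) * (\<eta> * n / 6)"
    using t by (simp add: field_simps)
  have "0 \<le> \<eta> * n"
    using \<eta>(1) n by simp
  then have m: "0 \<le> m"
    using \<eta>(2) by linarith
  have "n powr (-1/8) \<le> 1"
    using n powr_mono[of "-1/8" 0 n] by simp
  then have "t \<le> \<eta> * n / 6"
    using t' \<open>0 \<le> \<eta> * n\<close> mult_right_mono[of "n powr (-1/8)" 1 "\<eta> * n / 6"] by simp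
  then show "2 * t \<le> m"
    using \<eta>(2) m by linarith
  have "1/3 \<le> exp (-1::real)"
    using exp_le by (simp add: exp_minus field_simps)
  then have "\<eta> * n / 6 \<le> exp (-1) * m"
    using \<eta>(2) m mult_right_mono[of "1/3" "exp (-1)" m] by linarith
  with t' show "t \<le> exp (-1) * n powr (-1/8) * m"
    using mult_left_mono[of "\<eta> * n / 6" "exp (-1) * m" "n powr (-1/8)"] by (simp add: mult_ac)
qed

lemma empty_biclique_of_sparse_columns:
  fixes C n :: real
  assumes fin: "finite X" "finite Y" and C: "C > 1" and n: "n \<ge> 1"
    and sparse: "\<forall>y\<in>Y. 32 * C * card {x\<in>X. R x y} \<le> card X"
    and s: "real s \<le> C * log 2 n + 1" "2 * s \<le> card X"
    and t: "real t \<le> exp (-1) * n powr (-1/8) * card Y"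
  shows "\<exists>S T. S \<subseteq> X \<and> T \<subseteq> Y \<and> card S = s \<and> card T = t \<and> (\<forall>x\<in>S. \<forall>y\<in>T. \<not> R x y)"
proof -
  have "\<forall>y\<in>Y. card {x\<in>X. R x y} \<le> 1 / (32 * C) * card X"
    using sparse C by (simp add: field_simps)
  then obtain S Y' where S: "S \<subseteq> X" "card S = s" "Y' \<subseteq> Y" "\<forall>x\<in>S. \<forall>y\<in>Y'. \<not> R x y"
    and Y': "card Y * (1 - 2 * (1 / (32 * C))) ^ s \<le> card Y'"
    using greedy_empty_biclique[OF fin, of R "1 / (32 * C)" s] C s(2) by auto
  have "exp (-1) * n powr (-1/8) * card Y \<le> card Y * (1 - 1 / (16 * C)) ^ s"
    using power_one_minus_ge_exp_powr[OF C n s(1)] by (simp add: mult_left_mono mult.commute)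
  with Y' t have "t \<le> card Y'"
    by simp
  then obtain T where "T \<subseteq> Y'" "card T = t"
    by (metis obtain_subset_with_card_n)
  with S show ?thesis
    by blast
qed

lemma empty_biclique_of_sparse_rows:
  fixes C \<eta> n1 n2 :: real
  assumes C: "C > 1" and \<eta>: "0 \<le> \<eta>" and n: "n1 \<ge> 1" "n2 \<ge> 1"
    and fin: "finite A" "finite W"
    and A: "\<eta> * n1 \<le> 2 * real (card A)" and W: "\<eta> * n2 \<le> card W"
    and sparse: "\<forall>a\<in>A. 64 * C * card {w\<in>W. R a w} \<le> card W"
    and t1: "real t1 \<le> C * log 2 n1 + 1" "real t1 \<le> \<eta> / 6 * n1 powr (7/8)"
    and t2: "real t2 \<le> C * log 2 n2 + 1" "real t2 \<le> \<eta> / 6 * n2 powr (7/8)"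
  shows "\<exists>T1 T2. T1 \<subseteq> A \<and> T2 \<subseteq> W \<and> card T1 = t1 \<and> card T2 = t2 \<and>
           (\<forall>a\<in>T1. \<forall>w\<in>T2. \<not> R a w)"
proof (cases "n2 \<le> n1")
  \<comment> \<open>Choose greedily on the side with the smaller n: then the surviving fraction
      of the other side is at least exp (-1) * n1 powr (-1/8), and the bound on t1 absorbs it.\<close>
  case True
  have "\<forall>a\<in>A. 32 * C * card {w\<in>W. R a w} \<le> card W"
    using sparse C by (auto intro: order_trans[rotated])
  moreover have "log 2 n2 \<le> log 2 n1"
    using True n by simp
  then have "real t2 \<le> C * log 2 n1 + 1"
    using t2(1) C mult_left_mono[of "log 2 n2" "log 2 n1" C] by linarith
  moreover have "2 * t2 \<le> card W"
    using powr_seven_eighths_bounds(1)[OF n(2) \<eta> _ t2(2), of "card W"] W by simp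
  moreover have "real t1 \<le> exp (-1) * n1 powr (-1/8) * card A"
    using powr_seven_eighths_bounds(2)[OF n(1) \<eta> A t1(2)] by simp
  ultimately obtain S T where "S \<subseteq> W" "T \<subseteq> A" "card S = t2" "card T = t1"
      "\<forall>w\<in>S. \<forall>a\<in>T. \<not> R a w"
    using empty_biclique_of_sparse_columns[OF fin(2,1) C n(1), of "\<lambda>w a. R a w" t2 t1] by blast
  then show ?thesis
    by blast
next
  case False
  \<comment> \<open>Only the rows are sparse, so first pass to the columns of small degree.\<close>
  define W0 where "W0 = {w\<in>W. card {a\<in>A. R a w} \<le> 2 * (1 / (64 * C)) * card A}"
  have W0: "card W \<le> 2 * card W0"
    unfolding W0_def using C sparse by (intro card_sparse_columns_ge_half[OF fin]) (auto simp: field_simps)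
  have "\<forall>w\<in>W0. 32 * C * card {a\<in>A. R a w} \<le> card A"
    using C by (auto simp: W0_def field_simps)
  moreover have "log 2 n1 \<le> log 2 n2"
    using False n by simp
  then have "real t1 \<le> C * log 2 n2 + 1"
    using t1(1) C mult_left_mono[of "log 2 n1" "log 2 n2" C] by linarith
  moreover have "2 * t1 \<le> card A"
    using powr_seven_eighths_bounds(1)[OF n(1) \<eta> A t1(2)] by simp
  moreover have "real t2 \<le> exp (-1) * n2 powr (-1/8) * card W0"
    using powr_seven_eighths_bounds(2)[OF n(2) \<eta> _ t2(2)] W W0 by simp
  moreover have "W0 \<subseteq> W" "finite W0"
    using fin(2) by (auto simp: W0_def)
  ultimately obtain S T where "S \<subseteq> A" "T \<subseteq> W0" "card S = t1" "card T = t2"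
      "\<forall>a\<in>S. \<forall>w\<in>T. \<not> R a w"
    using empty_biclique_of_sparse_columns[OF fin(1) _ C n(2), of W0 R t1 t2] by blast
  with \<open>W0 \<subseteq> W\<close> show ?thesis
    by blast
qed

lemma bipartite_ramsey_not_homogeneous:
  assumes "bipartite_ramsey C V1 V2 E" "T1 \<subseteq> V1" "T2 \<subseteq> V2"
    and "C * log 2 (card V1) \<le> card T1" "C * log 2 (card V2) \<le> card T2"
  shows "\<exists>a\<in>T1. \<exists>w\<in>T2. ((a, w) \<in> E) \<noteq> p"
  using assms unfolding bipartite_ramsey_def by (cases p) blast+

lemma bipartite_ramsey_no_sparse_half:
  fixes C \<eta> :: real
  assumes C: "C > 1" and \<eta>: "0 \<le> \<eta>"
    and G: "bipartite_graph V1 V2 E" and ramsey: "bipartite_ramsey C V1 V2 E"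
    and n: "1 \<le> card V1" "1 \<le> card V2"
    and large: "C * log 2 (card V1) + 1 \<le> \<eta> / 6 * card V1 powr (7/8)"
      "C * log 2 (card V2) + 1 \<le> \<eta> / 6 * card V2 powr (7/8)"
    and W: "W \<subseteq> V2" "\<eta> * card V2 \<le> card W"
    and A: "A \<subseteq> V1" "\<eta> * card V1 \<le> 2 * real (card A)"
    and sparse: "\<forall>a\<in>A. 64 * C * card {w\<in>W. ((a, w) \<in> E) = p} \<le> card W"
  shows False
proof -
  have fin: "finite A" "finite W"
    using G A(1) W(1) by (auto simp: bipartite_graph_def finite_subset)
  define t1 where "t1 = nat \<lceil>C * log 2 (card V1)\<rceil>"
  define t2 where "t2 = nat \<lceil>C * log 2 (card V2)\<rceil>"
  have ceiling: "x \<le> real (nat \<lceil>x\<rceil>) \<and> real (nat \<lceil>x\<rceil>) \<le> x + 1" if "0 \<le> x" for x :: real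
    using that by linarith
  have t1: "C * log 2 (card V1) \<le> t1" "real t1 \<le> C * log 2 (card V1) + 1"
    using ceiling[of "C * log 2 (card V1)"] C n(1) by (auto simp: t1_def)
  have t2: "C * log 2 (card V2) \<le> t2" "real t2 \<le> C * log 2 (card V2) + 1"
    using ceiling[of "C * log 2 (card V2)"] C n(2) by (auto simp: t2_def)
  have t1': "real t1 \<le> \<eta> / 6 * card V1 powr (7/8)" and t2': "real t2 \<le> \<eta> / 6 * card V2 powr (7/8)"
    using t1(2) t2(2) large by linarith+
  have n': "1 \<le> real (card V1)" "1 \<le> real (card V2)"
    using n by simp_all
  obtain T1 T2 where T: "T1 \<subseteq> A" "T2 \<subseteq> W" "card T1 = t1" "card T2 = t2"
      "\<forall>a\<in>T1. \<forall>w\<in>T2. ((a, w) \<in> E) = (\<not> p)"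
    using empty_biclique_of_sparse_rows[OF C \<eta> n' fin A(2) W(2) sparse t1(2) t1' t2(2) t2']
    by auto
  have "T1 \<subseteq> V1" "T2 \<subseteq> V2"
    using T(1,2) A(1) W(1) by auto
  then have "\<exists>a\<in>T1. \<exists>w\<in>T2. ((a, w) \<in> E) \<noteq> (\<not> p)"
    using t1(1) t2(1) T(3,4) by (intro bipartite_ramsey_not_homogeneous[OF ramsey]) simp_all
  with T(5) show False
    by blast
qed

lemma bipartite_ramsey_splitting_vertex:
  fixes C \<eta> :: real
  assumes C: "C > 1" and \<eta>: "0 \<le> \<eta>" "\<eta> \<le> 1"
    and G: "bipartite_graph V1 V2 E" and ramsey: "bipartite_ramsey C V1 V2 E"
    and n: "1 \<le> card V1" "1 \<le> card V2"
    and large: "C * log 2 (card V1) + 1 \<le> \<eta> / 6 * card V1 powr (7/8)"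
      "C * log 2 (card V2) + 1 \<le> \<eta> / 6 * card V2 powr (7/8)"
    and W: "W \<subseteq> V2" "\<eta> * card V2 \<le> card W"
  shows "\<exists>v\<in>V1. card W \<le> 64 * C * card (nbhd V2 E v \<inter> W) \<and>
                card W \<le> 64 * C * card (W - nbhd V2 E v)"
proof (rule ccontr)
  assume no_split: "\<not> ?thesis"
  define A where "A p = {v\<in>V1. 64 * C * card {w\<in>W. ((v, w) \<in> E) = p} < card W}" for p
  have "nbhd V2 E v \<inter> W = {w\<in>W. ((v, w) \<in> E) = True}"
    and "W - nbhd V2 E v = {w\<in>W. ((v, w) \<in> E) = False}" for v
    using W(1) by (auto simp: nbhd_def)
  with no_split have "V1 = A True \<union> A False"
    by (auto simp: A_def not_le)
  then have "card V1 \<le> card (A True) + card (A False)"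
    by (metis card_Un_le)
  then obtain p where "card V1 \<le> 2 * card (A p)"
    by (metis add_le_mono le_cases mult_2 order_trans)
  then have half: "\<eta> * card V1 \<le> 2 * real (card (A p))"
    using \<eta>(2) mult_right_mono[of \<eta> 1 "card V1"] by simp
  have sub: "A p \<subseteq> V1" and sparse: "\<forall>a\<in>A p. 64 * C * card {w\<in>W. ((a, w) \<in> E) = p} \<le> card W"
    by (auto simp: A_def)
  from bipartite_ramsey_no_sparse_half[OF C \<eta>(1) G ramsey n large W sub half sparse]
  show False .
qed

lemma powr_neg_Suc_mult_le:
  fixes b x y z :: real
  assumes "b \<ge> 1" "b powr (- real m) * x \<le> y" "y \<le> b * z"
  shows "b powr (- real (Suc m)) * x \<le> z"
proof -
  have "b powr (- real (Suc m)) * x = b powr (- real m) * x / b"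
    using assms(1) by (simp add: powr_diff powr_minus divide_simps)
  also have "\<dots> \<le> z"
    using assms by (simp add: divide_le_eq mult.commute)
  finally show ?thesis .
qed

lemma splitting_chain:
  fixes N :: "'a \<Rightarrow> 'b set" and b :: real
  assumes b: "b \<ge> 1"
    and split: "\<And>W. W \<subseteq> V \<Longrightarrow> b powr (- real L) * card V \<le> card W \<Longrightarrow>
      \<exists>v\<in>U. card W \<le> b * card (N v \<inter> W) \<and> card W \<le> b * card (W - N v)"
  shows "\<exists>u. \<forall>m<L. u (Suc m) \<in> U \<and>
    b powr (- real (Suc m)) * card V \<le> card (N (u (Suc m)) \<inter> (V - (\<Union>j\<in>{1..m}. N (u j)))) \<and>
    b powr (- real (Suc m)) * card V \<le> card (V - (\<Union>j\<in>{1..Suc m}. N (u j)))"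
proof -
  define splits where
    "splits W v \<longleftrightarrow> v \<in> U \<and> card W \<le> b * card (N v \<inter> W) \<and> card W \<le> b * card (W - N v)"
    for W v
  define rest where "rest m = ((\<lambda>W. W - N (SOME v. splits W v)) ^^ m) V" for m
  define u where "u i = (SOME v. splits (rest (i - 1)) v)" for i
  have rest_Suc: "rest (Suc m) = rest m - N (u (Suc m))" for m
    by (simp add: rest_def u_def)
  have rest_eq: "rest m = V - (\<Union>j\<in>{1..m}. N (u j))" for m
  proof (induction m)
    case (Suc m)
    have "{1..Suc m} = insert (Suc m) {1..m}"
      by auto
    with Suc show ?case
      by (auto simp: rest_Suc)
  qed (simp add: rest_def)
  have splits_rest: "splits (rest m) (u (Suc m))" if "m \<le> L"
    and large: "b powr (- real m) * card V \<le> card (rest m)" for m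
  proof -
    have "b powr (- real L) * card V \<le> b powr (- real m) * card V"
      using b \<open>m \<le> L\<close> by (intro mult_right_mono powr_mono) auto
    with split[of "rest m"] large have "\<exists>v. splits (rest m) v"
      by (auto simp: splits_def rest_eq)
    then show ?thesis
      unfolding u_def by (simp add: someI_ex)
  qed
  have rest_large: "b powr (- real m) * card V \<le> card (rest m)" if "m \<le> L" for m
    using that
  proof (induction m)
    case (Suc m)
    then show ?case
      using splits_rest[of m] powr_neg_Suc_mult_le[OF b] by (simp add: splits_def rest_Suc)
  qed (simp add: rest_def)
  have "u (Suc m) \<in> U \<and> b powr (- real (Suc m)) * card V \<le> card (N (u (Suc m)) \<inter> rest m) \<and>
        b powr (- real (Suc m)) * card V \<le> card (rest (Suc m))" if "m < L" for m
    using splits_rest[of m] rest_large[of m] powr_neg_Suc_mult_le[OF b] that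
    by (simp add: splits_def rest_Suc)
  then show ?thesis
    unfolding rest_eq by blast
qed

lemma splitting_sequence:
  fixes N :: "'a \<Rightarrow> 'b set" and b :: real
  assumes b: "b \<ge> 1" and N: "\<And>v. N v \<subseteq> V"
    and split: "\<And>W. W \<subseteq> V \<Longrightarrow> b powr (- real L) * card V \<le> card W \<Longrightarrow>
      \<exists>v\<in>U. card W \<le> b * card (N v \<inter> W) \<and> card W \<le> b * card (W - N v)"
  shows "\<exists>u. (\<forall>i\<in>{1..L}. u i \<in> U) \<and>
    (\<forall>i\<in>{1..L}. b powr (- real i) * card V \<le> card (N (u i) - (\<Union>j\<in>{1..<i}. N (u j))) \<and>
                b powr (- real i) * card V \<le> card (V - (\<Union>j\<in>{1..i}. N (u j))))"
proof -
  obtain u where u: "\<forall>m<L. u (Suc m) \<in> U \<and>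
    b powr (- real (Suc m)) * card V \<le> card (N (u (Suc m)) \<inter> (V - (\<Union>j\<in>{1..m}. N (u j)))) \<and>
    b powr (- real (Suc m)) * card V \<le> card (V - (\<Union>j\<in>{1..Suc m}. N (u j)))"
    using splitting_chain[OF b split] by blast
  have "N (u (Suc m)) \<inter> (V - (\<Union>j\<in>{1..m}. N (u j))) = N (u (Suc m)) - (\<Union>j\<in>{1..<Suc m}. N (u j))"
    for m
    using N[of "u (Suc m)"] by (auto simp: atLeastLessThanSuc_atLeastAtMost)
  with u have "u i \<in> U \<and> b powr (- real i) * card V \<le> card (N (u i) - (\<Union>j\<in>{1..<i}. N (u j))) \<and>
      b powr (- real i) * card V \<le> card (V - (\<Union>j\<in>{1..i}. N (u j)))" if "i \<in> {1..L}" for i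
    using that by (cases i) auto
  then show ?thesis
    by blast
qed

lemma bipartite_ramsey_neighbourhood_sequence:
  fixes C :: real
  assumes C: "C > 1" and G: "bipartite_graph V1 V2 E" and ramsey: "bipartite_ramsey C V1 V2 E"
    and n: "1 \<le> card V1" "1 \<le> card V2"
    and large: "C * log 2 (card V1) + 1 \<le> (64 * C) powr (- real L) / 6 * card V1 powr (7/8)"
      "C * log 2 (card V2) + 1 \<le> (64 * C) powr (- real L) / 6 * card V2 powr (7/8)"
  shows "\<exists>u. (\<forall>i \<in> {1..L}. u i \<in> V1) \<and>
           (\<forall>i \<in> {1..L}.
              real (card (nbhd V2 E (u i) - (\<Union>j\<in>{1..<i}. nbhd V2 E (u j))))
                \<ge> (64 * C) powr (- real i) * real (card V2) \<and>
              real (card (V2 - (\<Union>j\<in>{1..i}. nbhd V2 E (u j))))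
                \<ge> (64 * C) powr (- real i) * real (card V2))"
proof (rule splitting_sequence)
  have "(64 * C) powr (- real L) \<le> (64 * C) powr 0"
    using C by (intro powr_mono) auto
  then have \<eta>: "0 \<le> (64 * C) powr (- real L)" "(64 * C) powr (- real L) \<le> 1"
    using C by auto
  show "\<exists>v\<in>V1. card W \<le> 64 * C * card (nbhd V2 E v \<inter> W) \<and>
                card W \<le> 64 * C * card (W - nbhd V2 E v)"
    if "W \<subseteq> V2" "(64 * C) powr (- real L) * card V2 \<le> card W" for W
    using bipartite_ramsey_splitting_vertex[OF C \<eta> G ramsey n large that] .
qed (use C in \<open>auto simp: nbhd_def\<close>)

theorem lemma2p3:
  fixes C :: real and L :: nat
  assumes "C > 1"
  shows "\<exists>n0 :: nat. \<forall>(V1 :: 'a set) (V2 :: 'b set) E.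
           bipartite_graph V1 V2 E \<longrightarrow> bipartite_ramsey C V1 V2 E \<longrightarrow>
           card V1 \<ge> n0 \<longrightarrow> card V2 \<ge> n0 \<longrightarrow>
           (\<exists>u :: nat \<Rightarrow> 'a. (\<forall>i \<in> {1..L}. u i \<in> V1) \<and>
              (\<forall>i \<in> {1..L}.
                 real (card (nbhd V2 E (u i) - (\<Union>j\<in>{1..<i}. nbhd V2 E (u j))))
                   \<ge> (64 * C) powr (- real i) * real (card V2) \<and>
                 real (card (V2 - (\<Union>j\<in>{1..i}. nbhd V2 E (u j))))
                   \<ge> (64 * C) powr (- real i) * real (card V2)))"
proof -
  have "0 < (64 * C) powr (- real L) / 6"
    using assms by simp
  then have "\<forall>\<^sub>F n in at_top. C * log 2 n + 1 \<le> (64 * C) powr (- real L) / 6 * n powr (7/8)"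
    by real_asymp
  then obtain N where N: "\<And>n. N \<le> n \<Longrightarrow> C * log 2 n + 1 \<le> (64 * C) powr (- real L) / 6 * n powr (7/8)"
    by (auto simp: eventually_at_top_linorder)
  show ?thesis
    by (intro exI[of _ "nat \<lceil>max N 1\<rceil>"] allI impI bipartite_ramsey_neighbourhood_sequence[OF assms])
      (assumption | rule N | simp add: nat_ceiling_le_eq)+
qed

end
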